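(* Let $k=\mathbb R$ or $\mathbb C$, let $(E,g)$ be a finite-dimensional inner product vector space over $k$, let $f\in\operatorname{End}_k(E)$, let $H_1,\dots,H_n$ be $f$-invariant subspaces with $E=H_1\oplus\dots\oplus H_n$, and write $f_i=f|_{H_i}$. Let $\widetilde{\mathcal H}_f^\perp=[\operatorname{Ker} f_1]_1^\perp\oplus\dots\oplus[\operatorname{Ker} f_n]_n^\perp$. Then $\widetilde{\mathcal H}_f^\perp=[\operatorname{Ker} f]^\perp$ if and only if $[\operatorname{Ker} f_i]_i^\perp\subseteq\big[\sum_{j\ne i}\operatorname{Ker} f_j\big]^\perp$ for every $i\in\{1,\dots,n\}$.
   Context: An inner product is linear in the first argument, conjugate-symmetric and positive definite. For a subspace $U\subseteq E$, $U^\perp=\{e\in E:g(u,e)=0\ \forall u\in U\}$; for a subspace $W\subseteq H_i$, $[W]_i^\perp=\{v\in H_i:g(w,v)=0\ \forall w\in W\}$. *)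

theory Defs
  imports "HOL-Analysis.Analysis"
begin

text \<open>An inner product g on the k-vector space (V, sc), k = real or complex,
  cj the conjugation of k (identity for real, cnj for complex):
  linear in the first argument, conjugate-symmetric, positive definite.\<close>
definition inner_product ::
  "('k::real_normed_field \<Rightarrow> 'v::ab_group_add \<Rightarrow> 'v) \<Rightarrow> ('k \<Rightarrow> 'k) \<Rightarrow> ('v \<Rightarrow> 'v \<Rightarrow> 'k) \<Rightarrow> bool" where
  "inner_product sc cj g \<longleftrightarrow>
     (\<forall>a u v w. g (sc a u + v) w = a * g u w + g v w) \<and>
     (\<forall>u v. g u v = cj (g v u)) \<and>
     (\<forall>v. v \<noteq> 0 \<longrightarrow> (\<exists>r::real. r > 0 \<and> g v v = of_real r))"

definition orth :: "('v \<Rightarrow> 'v \<Rightarrow> 'k::zero) \<Rightarrow> 'v set \<Rightarrow> 'v set" where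
  "orth g U = {e. \<forall>u\<in>U. g u e = 0}"

definition rel_orth :: "('v \<Rightarrow> 'v \<Rightarrow> 'k::zero) \<Rightarrow> 'v set \<Rightarrow> 'v set \<Rightarrow> 'v set" where
  "rel_orth g Hi W = {v\<in>Hi. \<forall>w\<in>W. g w v = 0}"

definition ssum :: "'i set \<Rightarrow> ('i \<Rightarrow> 'v::comm_monoid_add set) \<Rightarrow> 'v set" where
  "ssum I W = {sum w I | w. \<forall>j\<in>I. w j \<in> W j}"

definition is_direct_sum :: "('k::field \<Rightarrow> 'v::ab_group_add \<Rightarrow> 'v) \<Rightarrow> 'i set \<Rightarrow> ('i \<Rightarrow> 'v set) \<Rightarrow> bool" where
  "is_direct_sum sc I H \<longleftrightarrow>
     (\<forall>i\<in>I. module.subspace sc (H i)) \<and>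
     (\<forall>v. \<exists>!h. (\<forall>i\<in>I. h i \<in> H i) \<and> (\<forall>i. i \<notin> I \<longrightarrow> h i = 0) \<and> v = sum h I)"

end

theory Submission
  imports Defs
begin

(* Each block H i splits orthogonally as Ker f_i plus its relative complement P_i = [Ker f_i]_i^perp,
   and Ker f is the sum of the Ker f_i, so E = Ker f + (P_1 + ... + P_n).  Inside its own block P_i is
   orthogonal to Ker f_i, hence the sum of the P_i is orthogonal to Ker f exactly when each P_i is
   orthogonal to the other kernels.  In that case it is all of [Ker f]^perp: writing x in [Ker f]^perp
   as k + p with k in Ker f and p in the sum, g(k, x) = g(k, p) = 0 forces g(k, k) = 0, so k = 0. *)

lemma mem_ssum_iff: "x \<in> ssum I W \<longleftrightarrow> (\<exists>w. (\<forall>j\<in>I. w j \<in> W j) \<and> x = sum w I)"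
  unfolding ssum_def by auto

lemma ssum_single:
  assumes "finite I" "i \<in> I" "x \<in> W i" "\<forall>j\<in>I. 0 \<in> W j"
  shows "x \<in> ssum I W"
  unfolding mem_ssum_iff
proof (intro exI conjI)
  show "\<forall>j\<in>I. (if j = i then x else 0) \<in> W j" using assms(3,4) by simp
  show "x = (\<Sum>j\<in>I. if j = i then x else 0)" using assms(1,2) by simp
qed

lemma ssum_remove_subset:
  assumes "finite I" "0 \<in> W i"
  shows "ssum (I - {i}) W \<subseteq> ssum I W"
proof
  fix x assume "x \<in> ssum (I - {i}) W"
  then obtain w where w: "\<forall>j\<in>I - {i}. w j \<in> W j" "x = sum w (I - {i})"
    unfolding mem_ssum_iff by blast
  have "sum (w(i := 0)) I = sum (w(i := 0)) (I - {i})"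
    by (rule sum.mono_neutral_right) (use assms(1) in auto)
  also have "\<dots> = x" unfolding w(2) by (rule sum.cong) auto
  moreover have "\<forall>j\<in>I. (w(i := 0)) j \<in> W j" using w(1) assms(2) by simp
  ultimately show "x \<in> ssum I W" unfolding mem_ssum_iff by metis
qed

lemma ssum_remove_split:
  assumes "finite I" "i \<in> I" "u \<in> ssum I W"
  obtains w v where "w \<in> W i" "v \<in> ssum (I - {i}) W" "u = w + v"
proof -
  obtain k where k: "\<forall>j\<in>I. k j \<in> W j" "u = sum k I" using assms(3) unfolding mem_ssum_iff by blast
  have "u = k i + sum k (I - {i})" using k(2) sum.remove[OF assms(1,2)] by simp
  moreover have "sum k (I - {i}) \<in> ssum (I - {i}) W" unfolding mem_ssum_iff using k(1) by auto
  ultimately show thesis using that k(1) assms(2) by blast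
qed

context vector_space
begin

lemma direct_sum_subspace: "is_direct_sum scale I H \<Longrightarrow> i \<in> I \<Longrightarrow> subspace (H i)"
  unfolding is_direct_sum_def by blast

lemma direct_sum_ex1_components:
  "is_direct_sum scale I H \<Longrightarrow>
    \<exists>!h. (\<forall>i\<in>I. h i \<in> H i) \<and> (\<forall>i. i \<notin> I \<longrightarrow> h i = 0) \<and> v = sum h I"
  unfolding is_direct_sum_def by (elim conjE allE)

lemma direct_sum_decompose:
  assumes "is_direct_sum scale I H"
  obtains h where "\<forall>i\<in>I. h i \<in> H i" "v = sum h I"
  using ex1_implies_ex[OF direct_sum_ex1_components[OF assms]] that by blast

lemma direct_sum_components_unique:
  assumes ds: "is_direct_sum scale I H" and h: "\<forall>j\<in>I. h j \<in> H j" and h': "\<forall>j\<in>I. h' j \<in> H j"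
    and eq: "sum h I = sum h' I" and i: "i \<in> I"
  shows "h i = h' i"
proof -
  define r where "r k j = (if j \<in> I then k j else 0)" for k :: "_ \<Rightarrow> 'b" and j
  have sum_r: "sum (r k) I = sum k I" for k by (rule sum.cong) (simp_all add: r_def)
  have "Uniq (\<lambda>k. (\<forall>j\<in>I. k j \<in> H j) \<and> (\<forall>j. j \<notin> I \<longrightarrow> k j = 0) \<and> sum h I = sum k I)"
    using direct_sum_ex1_components[OF ds, of "sum h I", unfolded ex1_iff_ex_Uniq] by (rule conjunct2)
  moreover have "\<forall>j\<in>I. r h j \<in> H j" "\<forall>j\<in>I. r h' j \<in> H j" "\<forall>j. j \<notin> I \<longrightarrow> r h j = 0"
    "\<forall>j. j \<notin> I \<longrightarrow> r h' j = 0"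
    using h h' by (simp_all add: r_def)
  ultimately have "r h = r h'" using sum_r eq by (auto dest: Uniq_D)
  then show ?thesis using i by (metis r_def)
qed

lemma kernel_eq_ssum_kernels:
  fixes f :: "'b \<Rightarrow> 'b" and H :: "'i \<Rightarrow> 'b set"
  assumes lin: "Vector_Spaces.linear scale scale f" and ds: "is_direct_sum scale I H"
    and inv: "\<forall>i\<in>I. f ` H i \<subseteq> H i"
  shows "{v. f v = 0} = ssum I (\<lambda>i. H i \<inter> {v. f v = 0})"
proof
  have f_sum: "f (sum h A) = (\<Sum>j\<in>A. f (h j))" for h :: "'i \<Rightarrow> 'b" and A
    using lin by (simp add: linear_iff_module_hom module_hom.sum)
  show "ssum I (\<lambda>i. H i \<inter> {v. f v = 0}) \<subseteq> {v. f v = 0}"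
    by (auto simp: mem_ssum_iff f_sum)
  show "{v. f v = 0} \<subseteq> ssum I (\<lambda>i. H i \<inter> {v. f v = 0})"
  proof
    fix v assume v: "v \<in> {v. f v = 0}"
    obtain h where h: "\<forall>i\<in>I. h i \<in> H i" "v = sum h I"
      using direct_sum_decompose[OF ds] .
    have "\<forall>i\<in>I. f (h i) \<in> H i" using h(1) inv by blast
    moreover have "(\<Sum>i\<in>I. f (h i)) = 0" using h(2) v by (simp add: f_sum)
    moreover have "\<forall>i\<in>I. 0 \<in> H i" using direct_sum_subspace[OF ds] subspace_0 by blast
    ultimately have "\<forall>i\<in>I. f (h i) = 0"
      using direct_sum_components_unique[OF ds, of "\<lambda>i. f (h i)" "\<lambda>_. 0"] by simp
    then show "v \<in> ssum I (\<lambda>i. H i \<inter> {v. f v = 0})"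
      unfolding mem_ssum_iff using h by auto
  qed
qed

end

locale anisotropic_sesquilinear_form = vector_space sc
  for sc :: "'k::field \<Rightarrow> 'v::ab_group_add \<Rightarrow> 'v" +
  fixes g :: "'v \<Rightarrow> 'v \<Rightarrow> 'k" and cj :: "'k \<Rightarrow> 'k"
  assumes g_linear_left: "g (sc a u + v) w = a * g u w + g v w"
    and g_add_right: "g u (v + w) = g u v + g u w"
    and g_scale_right: "g u (sc a v) = cj a * g u v"
    and g_self_eq_0: "g v v = 0 \<Longrightarrow> v = 0"
    and cj_cj: "cj (cj a) = a"
begin

lemma g_add_left: "g (u + v) w = g u w + g v w"
  using g_linear_left[of 1 u v w] by simp

lemma g_zero_left: "g 0 w = 0"
  using g_linear_left[of "-1" w w] by simp

lemma g_scale_left: "g (sc a u) w = a * g u w"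
  using g_linear_left[of a u 0 w] by (simp add: g_zero_left)

lemma g_zero_right: "g w 0 = 0"
  using g_add_right[of w 0 0] by (metis add_cancel_right_right)

lemma g_diff_right: "g w (u - v) = g w u - g w v"
  using g_add_right[of w "u - v" v] by (simp add: algebra_simps)

lemma g_sum_right: "g w (sum h A) = (\<Sum>i\<in>A. g w (h i))"
  by (induction A rule: infinite_finite_induct) (auto simp: g_zero_right g_add_right)

lemma orthogonal_to_span:
  assumes "\<forall>s\<in>S. g s x = 0" "y \<in> span S"
  shows "g y x = 0"
  using assms(2)
proof (induction rule: span_induct)
  show "subspace {y. g y x = 0}"
    by (rule subspaceI) (auto simp: g_zero_left g_add_left g_scale_left)
qed (use assms(1) in auto)

lemma orthogonal_projection_span:
  assumes "finite S"
  shows "\<exists>k\<in>span S. \<forall>s\<in>S. g s (h - k) = 0"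
  using assms
proof (induction S arbitrary: h rule: finite_induct)
  case empty
  show ?case using span_zero by auto
next
  case (insert a S)
  obtain k0 where k0: "k0 \<in> span S" "\<forall>s\<in>S. g s (h - k0) = 0" using insert.IH by blast
  obtain k1 where k1: "k1 \<in> span S" "\<forall>s\<in>S. g s (a - k1) = 0" using insert.IH by blast
  have span_S: "span S \<subseteq> span (insert a S)" by (rule span_mono) auto
  show ?case
  proof (cases "a = k1")
    case True
    then have "g a (h - k0) = 0" using orthogonal_to_span[OF k0(2)] k1(1) by simp
    then show ?thesis using k0 span_S by auto
  next
    case False
    \<comment> \<open>Gram-Schmidt step: correct k0 along the component a' of a orthogonal to S.\<close>
    define a' where "a' = a - k1"
    have "g a' a' \<noteq> 0" using False g_self_eq_0 unfolding a'_def by force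
    define k where "k = k0 + sc (cj (g a' (h - k0) / g a' a')) a'"
    have "a' \<in> span (insert a S)"
      unfolding a'_def using span_diff span_base[of a "insert a S"] k1(1) span_S by blast
    then have k_span: "k \<in> span (insert a S)"
      unfolding k_def using span_add span_scale k0(1) span_S by blast
    have h_k: "h - k = (h - k0) - sc (cj (g a' (h - k0) / g a' a')) a'"
      unfolding k_def by (simp add: algebra_simps)
    have orth_S: "\<forall>s\<in>S. g s (h - k) = 0"
      using k0(2) k1(2) unfolding h_k a'_def by (simp add: g_diff_right g_scale_right)
    have "g a' (h - k) = 0"
      unfolding h_k using \<open>g a' a' \<noteq> 0\<close> by (simp add: g_diff_right g_scale_right cj_cj)
    moreover have "g k1 (h - k) = 0" using orthogonal_to_span[OF orth_S k1(1)] .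
    ultimately have "g a (h - k) = 0"
      using g_add_left[of a' k1 "h - k"] unfolding a'_def by simp
    then show ?thesis using k_span orth_S by auto
  qed
qed

lemma orthogonal_projection:
  assumes "finite B" "W \<subseteq> span B" "subspace W"
  shows "\<exists>k\<in>W. h - k \<in> orth g W"
proof -
  obtain C where C: "C \<subseteq> W" "independent C" "W \<subseteq> span C"
    using maximal_independent_subset[of W] by blast
  have "finite C" using independent_span_bound[OF assms(1) C(2)] C(1) assms(2) by blast
  then obtain k where k: "k \<in> span C" "\<forall>s\<in>C. g s (h - k) = 0"
    using orthogonal_projection_span by blast
  have "span C = W" using span_subspace[OF C(1) C(3) assms(3)] .
  then show ?thesis
    using k orthogonal_to_span[OF k(2)] unfolding orth_def by auto
qed

lemma orth_subset_complement:
  assumes "A \<subseteq> orth g S" "\<forall>x. \<exists>s\<in>S. \<exists>a\<in>A. x = s + a"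
  shows "orth g S \<subseteq> A"
proof
  fix x assume x: "x \<in> orth g S"
  obtain s a where sa: "s \<in> S" "a \<in> A" "x = s + a" using assms(2) by blast
  have "g s s = g s x - g s a" using sa(3) g_add_right[of s s a] by simp
  also have "\<dots> = 0" using x sa(1,2) assms(1) unfolding orth_def by auto
  finally have "s = 0" by (rule g_self_eq_0)
  then show "x \<in> A" using sa by simp
qed

lemma ssum_subset_orth_ssum:
  assumes "finite I" "\<forall>i\<in>I. P i \<subseteq> orth g (K i)"
    "\<forall>i\<in>I. P i \<subseteq> orth g (ssum (I - {i}) K)"
  shows "ssum I P \<subseteq> orth g (ssum I K)"
proof
  fix x assume "x \<in> ssum I P"
  then obtain p where p: "\<forall>i\<in>I. p i \<in> P i" "x = sum p I" unfolding mem_ssum_iff by blast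
  have "g u (p i) = 0" if u: "u \<in> ssum I K" and i: "i \<in> I" for u i
  proof -
    obtain k v where k: "k \<in> K i" and v: "v \<in> ssum (I - {i}) K" and "u = k + v"
      using ssum_remove_split[OF assms(1) i u] .
    moreover have "p i \<in> orth g (K i)" "p i \<in> orth g (ssum (I - {i}) K)"
      using assms(2,3) p(1) i by blast+
    ultimately show ?thesis unfolding orth_def by (simp add: g_add_left)
  qed
  then show "x \<in> orth g (ssum I K)" unfolding orth_def p(2) by (simp add: g_sum_right)
qed

lemma ssum_eq_orth_ssum_iff:
  assumes "finite I" "\<forall>i\<in>I. 0 \<in> K i" "\<forall>i\<in>I. 0 \<in> P i"
    and P_orth_K: "\<forall>i\<in>I. P i \<subseteq> orth g (K i)"
    and complement: "\<forall>x. \<exists>k\<in>ssum I K. \<exists>p\<in>ssum I P. x = k + p"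
  shows "ssum I P = orth g (ssum I K) \<longleftrightarrow> (\<forall>i\<in>I. P i \<subseteq> orth g (ssum (I - {i}) K))"
proof
  assume eq: "ssum I P = orth g (ssum I K)"
  show "\<forall>i\<in>I. P i \<subseteq> orth g (ssum (I - {i}) K)"
  proof (intro ballI subsetI)
    fix i p assume "i \<in> I" "p \<in> P i"
    then have "p \<in> orth g (ssum I K)" using ssum_single[OF assms(1)] assms(3) eq by blast
    then show "p \<in> orth g (ssum (I - {i}) K)"
      using ssum_remove_subset[OF assms(1)] assms(2) \<open>i \<in> I\<close> unfolding orth_def by blast
  qed
next
  assume "\<forall>i\<in>I. P i \<subseteq> orth g (ssum (I - {i}) K)"
  then have "ssum I P \<subseteq> orth g (ssum I K)"
    using ssum_subset_orth_ssum[OF assms(1) P_orth_K] by blast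
  then show "ssum I P = orth g (ssum I K)"
    using orth_subset_complement[OF _ complement] by blast
qed

lemma ssum_rel_orth_kernels_eq_orth_kernel_iff:
  assumes B: "finite B" "span B = UNIV" and "finite I"
    and lin: "Vector_Spaces.linear sc sc f" and ds: "is_direct_sum sc I H"
    and inv: "\<forall>i\<in>I. f ` H i \<subseteq> H i"
  shows "ssum I (\<lambda>i. rel_orth g (H i) (H i \<inter> {v. f v = 0})) = orth g {v. f v = 0}
    \<longleftrightarrow> (\<forall>i\<in>I. rel_orth g (H i) (H i \<inter> {v. f v = 0})
          \<subseteq> orth g (ssum (I - {i}) (\<lambda>j. H j \<inter> {v. f v = 0})))"
proof -
  define K where "K i = H i \<inter> {v. f v = 0}" for i
  define P where "P i = rel_orth g (H i) (K i)" for i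
  have H_subspace: "subspace (H i)" if "i \<in> I" for i
    using direct_sum_subspace[OF ds that] .
  have K_subspace: "subspace (K i)" if "i \<in> I" for i
    unfolding K_def using subspace_inter[OF H_subspace[OF that]] lin
    by (simp add: linear_iff_module_hom module_hom.subspace_kernel)
  have P_orth_K: "P i \<subseteq> orth g (K i)" for i
    unfolding P_def rel_orth_def orth_def by blast
  have split_H: "\<exists>k\<in>K i. h - k \<in> P i" if i: "i \<in> I" and h: "h \<in> H i" for i h
  proof -
    obtain k where "k \<in> K i" "h - k \<in> orth g (K i)"
      using orthogonal_projection[OF B(1) _ K_subspace[OF i]] B(2) by blast
    moreover have "h - k \<in> H i"
      using subspace_diff[OF H_subspace[OF i] h] \<open>k \<in> K i\<close> unfolding K_def by blast
    ultimately show ?thesis unfolding P_def rel_orth_def orth_def by blast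
  qed
  have complement: "\<forall>x. \<exists>k\<in>ssum I K. \<exists>p\<in>ssum I P. x = k + p"
  proof (intro allI)
    fix x
    obtain h where h: "\<forall>i\<in>I. h i \<in> H i" "x = sum h I"
      using direct_sum_decompose[OF ds] .
    have "\<forall>i\<in>I. \<exists>k. k \<in> K i \<and> h i - k \<in> P i" using split_H h(1) by blast
    then obtain k where k: "\<forall>i\<in>I. k i \<in> K i \<and> h i - k i \<in> P i" by metis
    have "sum k I \<in> ssum I K" "(\<Sum>i\<in>I. h i - k i) \<in> ssum I P"
      unfolding mem_ssum_iff using k by auto
    moreover have "x = sum k I + (\<Sum>i\<in>I. h i - k i)" unfolding h(2) sum_subtractf by simp
    ultimately show "\<exists>k\<in>ssum I K. \<exists>p\<in>ssum I P. x = k + p" by blast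
  qed
  have "ssum I P = orth g (ssum I K) \<longleftrightarrow> (\<forall>i\<in>I. P i \<subseteq> orth g (ssum (I - {i}) K))"
  proof (rule ssum_eq_orth_ssum_iff[OF \<open>finite I\<close> _ _ _ complement])
    show "\<forall>i\<in>I. 0 \<in> K i" "\<forall>i\<in>I. 0 \<in> P i"
      using K_subspace H_subspace subspace_0 g_zero_right
      unfolding P_def rel_orth_def by auto
  qed (use P_orth_K in blast)
  then show ?thesis using kernel_eq_ssum_kernels[OF lin ds inv] unfolding K_def P_def by simp
qed

end

lemma inner_product_anisotropic_sesquilinear_form:
  fixes sc :: "'k::real_normed_field \<Rightarrow> 'v::ab_group_add \<Rightarrow> 'v"
  assumes "vector_space sc" and ip: "inner_product sc cj g"
    and cj_add: "\<And>a b. cj (a + b) = cj a + cj b"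
    and cj_mult: "\<And>a b. cj (a * b) = cj a * cj b"
    and "\<And>a. cj (cj a) = a"
  shows "anisotropic_sesquilinear_form sc g cj"
proof -
  interpret vector_space sc by fact
  have g_linear_left: "g (sc a u + v) w = a * g u w + g v w"
    and g_conj_sym: "g u v = cj (g v u)"
    and g_pos: "v \<noteq> 0 \<Longrightarrow> \<exists>r::real. r > 0 \<and> g v v = of_real r" for a u v w
    using ip unfolding inner_product_def by blast+
  have g_add_left: "g (u + v) w = g u w + g v w" for u v w
    using g_linear_left[of 1 u v w] by simp
  have g_scale_left: "g (sc a u) w = a * g u w" for a u w
    using g_linear_left[of a u 0 w] g_linear_left[of "-1" w w] by simp
  show ?thesis
  proof (intro anisotropic_sesquilinear_form.intro anisotropic_sesquilinear_form_axioms.intro)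
    show "vector_space sc" by fact
    show "g (sc a u + v) w = a * g u w + g v w" for a u v w by (rule g_linear_left)
    show "g u (v + w) = g u v + g u w" for u v w
      by (subst (1 2 3) g_conj_sym) (simp add: g_add_left cj_add)
    show "g u (sc a v) = cj a * g u v" for u a v
      by (subst (1 2) g_conj_sym) (simp add: g_scale_left cj_mult)
    show "v = 0" if "g v v = 0" for v
      using that g_pos[of v] by force
    show "cj (cj a) = a" for a by fact
  qed
qed

theorem lemma3p8:
  shows
  "(\<forall>(sc :: real \<Rightarrow> 'v::ab_group_add \<Rightarrow> 'v) (g :: 'v \<Rightarrow> 'v \<Rightarrow> real) (f :: 'v \<Rightarrow> 'v)
       (H :: nat \<Rightarrow> 'v set) (n :: nat).
      vector_space sc \<and> (\<exists>B. finite B \<and> module.span sc B = UNIV) \<and>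
      inner_product sc id g \<and> Vector_Spaces.linear sc sc f \<and>
      is_direct_sum sc {1..n} H \<and> (\<forall>i\<in>{1..n}. f ` H i \<subseteq> H i) \<longrightarrow>
      (ssum {1..n} (\<lambda>i. rel_orth g (H i) (H i \<inter> {v. f v = 0})) = orth g {v. f v = 0}
       \<longleftrightarrow> (\<forall>i\<in>{1..n}. rel_orth g (H i) (H i \<inter> {v. f v = 0})
                \<subseteq> orth g (ssum ({1..n} - {i}) (\<lambda>j. H j \<inter> {v. f v = 0})))))
   \<and>
   (\<forall>(sc :: complex \<Rightarrow> 'w::ab_group_add \<Rightarrow> 'w) (g :: 'w \<Rightarrow> 'w \<Rightarrow> complex) (f :: 'w \<Rightarrow> 'w)
       (H :: nat \<Rightarrow> 'w set) (n :: nat).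
      vector_space sc \<and> (\<exists>B. finite B \<and> module.span sc B = UNIV) \<and>
      inner_product sc cnj g \<and> Vector_Spaces.linear sc sc f \<and>
      is_direct_sum sc {1..n} H \<and> (\<forall>i\<in>{1..n}. f ` H i \<subseteq> H i) \<longrightarrow>
      (ssum {1..n} (\<lambda>i. rel_orth g (H i) (H i \<inter> {v. f v = 0})) = orth g {v. f v = 0}
       \<longleftrightarrow> (\<forall>i\<in>{1..n}. rel_orth g (H i) (H i \<inter> {v. f v = 0})
                \<subseteq> orth g (ssum ({1..n} - {i}) (\<lambda>j. H j \<inter> {v. f v = 0})))))"
  apply (intro conjI allI impI; elim conjE exE)
  subgoal
    by (rule anisotropic_sesquilinear_form.ssum_rel_orth_kernels_eq_orth_kernel_iff
        [OF inner_product_anisotropic_sesquilinear_form[where cj = id]]) simp_all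
  subgoal
    by (rule anisotropic_sesquilinear_form.ssum_rel_orth_kernels_eq_orth_kernel_iff
        [OF inner_product_anisotropic_sesquilinear_form[where cj = cnj]]) simp_all
  done

end
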